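(* Suppose $N>K$, $2\le g\le \frac{K}{3\lceil N/M\rceil}$ and $\lceil N/M\rceil\le \frac{K}{\frac{27}{4}\log K}$. Use the new placement scheme with $F=\lceil N/M\rceil F'$ packets per file, where $F'=c\binom{K}{g}\big(\log\binom{K}{g}\big)^2$ for a constant $c>0$ (so $F=O\big(\binom{K}{g}(\log\binom{K}{g})^2\lceil N/M\rceil\big)$), and use the modified (pull-down) delivery scheme with parameter $g$. Then for every demand vector $\mathbf{d}\in[1:N]^K$, $$\mathbb{E}\big[R^{md}(\mathcal{C},\mathbf{d})\big]\le \frac43\,\frac{K}{g+1}\,(1+o(1)),$$ where the expectation is over the randomness of both placement and delivery and $o(1)\to0$ as $K\to\infty$.
   Context: Setting: a server holds a library of $N$ files, each split into $F$ packets (packet $f$ of file $n$ denoted $(n,f)$); $K$ users each have a cache of size $M$ files ($M\le N$). For a cache configuration $\mathcal{C}$, $S_{n,f}\subseteq[1:K]$ is the set of users whose cache stores packet $(n,f)$. User $k$ requests file $d_k$. New placement scheme: $F=\lceil N/M\rceil F'$ with $F'$ a positive integer; the packets of every file are partitioned into $F'$ groups of $\lceil N/M\rceil$ packets. For every user $k$, file $n$ and group, exactly one packet of the group is chosen uniformly at random and stored in user $k$'s cache; all choices are independent. Modified delivery scheme with parameter $g$: (1) Pull-down phase: for every $k\in[1:K]$ and $f\in[1:F]$ with $|S_{d_k,f}|\ge g+1$, replace $S_{d_k,f}$ (virtually, for delivery purposes only) by a uniformly random $g$-element subset of $S_{d_k,f}$, independently; other sets are unchanged. (2) With these modified sets,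 for $k\in[1:K]$ and $T\subseteq[1:K]\setminus\{k\}$ let $V_{k,T}$ be the set of packets $f$ of file $d_k$ whose (modified) set equals $T$; for every nonempty $\mathcal{S}\subseteq[1:K]$ transmit the XOR of the zero-padded packet vectors $V_{k,\mathcal{S}\setminus\{k\}}$, $k\in\mathcal{S}$. The normalized number of transmissions is $$R^{md}(\mathcal{C},\mathbf{d})=\sum_{\emptyset\ne\mathcal{S}\subseteq[1:K]}\frac{\max_{k\in\mathcal{S}}|V_{k,\mathcal{S}\setminus\{k\}}|}{F},$$ a random variable depending on the placement and on the random choices in the pull-down phase. *)

theory Defs
  imports "HOL-Probability.Probability"
begin

text \<open>Conventions: users are 0..K-1, files 0..N-1, packets 0..F-1, groups 0..F'-1.
  q = ceil(N/M) is the group size; packet f belongs to group f div q and has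
  position f mod q inside its group (F = q * F').\<close>

definition grp_size :: "nat \<Rightarrow> real \<Rightarrow> nat" where
  "grp_size N M = nat \<lceil>real N / M\<rceil>"

text \<open>A placement configuration: pl (k, n, j) = index (in 0..q-1) of the packet of group j
  of file n stored by user k.\<close>
type_synonym placement = "nat \<times> nat \<times> nat \<Rightarrow> nat"

definition placement_pmf :: "nat \<Rightarrow> nat \<Rightarrow> nat \<Rightarrow> nat \<Rightarrow> placement pmf" where
  "placement_pmf K N q F' =
     pmf_of_set (PiE ({..<K} \<times> {..<N} \<times> {..<F'}) (\<lambda>_. {..<q}))"

definition cache_set :: "nat \<Rightarrow> nat \<Rightarrow> placement \<Rightarrow> nat \<Rightarrow> nat \<Rightarrow> nat set" where
  "cache_set K q pl n f = {k \<in> {..<K}. pl (k, n, f div q) = f mod q}"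

definition pulldown_choices :: "nat \<Rightarrow> nat set \<Rightarrow> nat set set" where
  "pulldown_choices g S =
     (if g + 1 \<le> card S then {T. T \<subseteq> S \<and> card T = g} else {S})"

definition pulldown_pmf :: "nat \<Rightarrow> nat \<Rightarrow> nat \<Rightarrow> nat \<Rightarrow> (nat \<Rightarrow> nat) \<Rightarrow> placement
    \<Rightarrow> (nat \<times> nat \<Rightarrow> nat set) pmf" where
  "pulldown_pmf K q F g d pl =
     pmf_of_set (PiE ({..<K} \<times> {..<F})
        (\<lambda>(k, f). pulldown_choices g (cache_set K q pl (d k) f)))"

definition Vset :: "nat \<Rightarrow> (nat \<times> nat \<Rightarrow> nat set) \<Rightarrow> nat \<Rightarrow> nat set \<Rightarrow> nat set" where
  "Vset F T k A = {f \<in> {..<F}. T (k, f) = A}"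

definition rate_md :: "nat \<Rightarrow> nat \<Rightarrow> (nat \<times> nat \<Rightarrow> nat set) \<Rightarrow> real" where
  "rate_md K F T =
     (\<Sum>S\<in>Pow {..<K} - {{}}. real (Max ((\<lambda>k. card (Vset F T k (S - {k}))) ` S)) / real F)"

definition expected_rate_md ::
    "nat \<Rightarrow> nat \<Rightarrow> real \<Rightarrow> nat \<Rightarrow> nat \<Rightarrow> (nat \<Rightarrow> nat) \<Rightarrow> real" where
  "expected_rate_md K N M F' g d =
     (let q = grp_size N M; F = q * F' in
      measure_pmf.expectation
        (bind_pmf (placement_pmf K N q F') (\<lambda>pl. pulldown_pmf K q F g d pl))
        (rate_md K F))"

end

theory Submission
  imports Defs "HOL-Real_Asymp.Real_Asymp"
begin

text \<open>
  A set S of g + 1 users contributes max_{k \<in> S} |V_{k,S-{k}}| / F to the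
  rate; after the pull-down, larger sets contribute nothing, and smaller sets only receive
  packets whose cache set already had fewer than g users, which by a Chernoff bound is
  unlikely when g \<le> K/(3q) and q \<le> 4K/(27 ln K). The maximum is bounded through a
  log-sum-exp, so only the exponential moments of |V_{k,A}| with |A| = g are needed. Given the
  placement, the pull-down acts independently on the packets; within a group of q packets at
  most one cache set contains A, so by convexity of exp the group contributes a factor
  1 + (e^{e^t - 1} - 1) p, and averaging over the placement, where all g-sets of users play
  symmetric roles, gives p \<le> q / C(K,g). With F' \<ge> c C(K,g) (ln C(K,g))^2 and
  t = 1/\<surd>(ln K) the rate is at most K/(g+1) (1 + o(1)).
\<close>

section \<open>Uniform averages\<close>

text \<open>The expectation under the uniform distribution on A; it is 0 for empty or infinite A.\<close>
definition avg :: "'a set \<Rightarrow> ('a \<Rightarrow> real) \<Rightarrow> real" where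
  "avg A f = (\<Sum>x\<in>A. f x) / real (card A)"

lemma avg_mono: "(\<And>x. x \<in> A \<Longrightarrow> f x \<le> h x) \<Longrightarrow> avg A f \<le> avg A h"
  unfolding avg_def by (intro divide_right_mono sum_mono) auto

lemma avg_nonneg: "(\<And>x. x \<in> A \<Longrightarrow> 0 \<le> f x) \<Longrightarrow> 0 \<le> avg A f"
  unfolding avg_def by (intro divide_nonneg_nonneg sum_nonneg) auto

lemma avg_add: "avg A (\<lambda>x. f x + h x) = avg A f + avg A h"
  unfolding avg_def by (simp add: sum.distrib add_divide_distrib)

lemma avg_sum: "avg A (\<lambda>x. \<Sum>i\<in>I. f i x) = (\<Sum>i\<in>I. avg A (f i))"
  unfolding avg_def by (simp add: sum.swap[of _ A] sum_divide_distrib)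

lemma avg_cmult: "avg A (\<lambda>x. c * f x) = c * avg A f"
  unfolding avg_def by (simp add: sum_distrib_left)

lemma avg_divide: "avg A (\<lambda>x. f x / c) = avg A f / c"
  unfolding avg_def by (simp add: sum_divide_distrib[symmetric])

lemma avg_const: "finite A \<Longrightarrow> A \<noteq> {} \<Longrightarrow> avg A (\<lambda>_. c) = c"
  unfolding avg_def by simp

lemma avg_affine: "finite A \<Longrightarrow> A \<noteq> {} \<Longrightarrow> avg A (\<lambda>x. a * f x + b) = a * avg A f + b"
  by (simp add: avg_add avg_cmult avg_const)

lemma avg_PiE_prod:
  assumes "finite I" "\<And>i. i \<in> I \<Longrightarrow> finite (A i)"
  shows "avg (PiE I A) (\<lambda>x. \<Prod>i\<in>I. h i (x i)) = (\<Prod>i\<in>I. avg (A i) (h i))"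
  using assms by (simp add: avg_def prod_sum_PiE[symmetric] card_PiE prod_dividef)

section \<open>The pull-down distribution\<close>

lemma finite_pulldown_choices: "finite S \<Longrightarrow> finite (pulldown_choices g S)"
  unfolding pulldown_choices_def by (auto intro: finite_subset[of _ "Pow S"])

lemma card_pulldown_choices:
  "finite S \<Longrightarrow> g + 1 \<le> card S \<Longrightarrow> card (pulldown_choices g S) = card S choose g"
  unfolding pulldown_choices_def by (simp add: n_subsets)

lemma pulldown_choices_nonempty: "finite S \<Longrightarrow> pulldown_choices g S \<noteq> {}"
proof (cases "g + 1 \<le> card S")
  case True
  assume "finite S"
  then have "card (pulldown_choices g S) > 0" using True by (simp add: card_pulldown_choices)
  then show ?thesis by auto
qed (simp add: pulldown_choices_def)

lemma pulldown_choicesD: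
  "T \<in> pulldown_choices g S \<Longrightarrow> T \<subseteq> S \<and> (card T = g \<or> (T = S \<and> card S \<le> g))"
  unfolding pulldown_choices_def by (auto split: if_splits)

definition pulldown_prob :: "nat \<Rightarrow> nat set \<Rightarrow> nat set \<Rightarrow> real" where
  "pulldown_prob g A S =
     (if A \<in> pulldown_choices g S then 1 / real (card (pulldown_choices g S)) else 0)"

lemma pulldown_prob_eq:
  "finite S \<Longrightarrow> pulldown_prob g A S =
     (if g + 1 \<le> card S then (if A \<subseteq> S \<and> card A = g then 1 / real (card S choose g) else 0)
      else (if A = S then 1 else 0))"
  unfolding pulldown_prob_def
  by (auto simp: card_pulldown_choices) (auto simp: pulldown_choices_def split: if_splits)

lemma pulldown_prob_nonneg: "0 \<le> pulldown_prob g A S"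
  unfolding pulldown_prob_def by auto

lemma pulldown_prob_le_1: "finite S \<Longrightarrow> pulldown_prob g A S \<le> 1"
  using pulldown_choices_nonempty[of S g] finite_pulldown_choices[of S g]
  unfolding pulldown_prob_def by (auto simp: Suc_leI card_gt_0_iff)

lemma pulldown_prob_nonzero_imp_subset: "pulldown_prob g A S \<noteq> 0 \<Longrightarrow> A \<subseteq> S"
  unfolding pulldown_prob_def using pulldown_choicesD by (auto split: if_splits)

lemma pulldown_prob_image:
  assumes "inj_on \<pi> U" "finite U" "A \<subseteq> U" "S \<subseteq> U"
  shows "pulldown_prob g (\<pi> ` A) (\<pi> ` S) = pulldown_prob g A S"
proof -
  have "finite S" using assms(2,4) by (rule finite_subset[rotated])
  moreover have "card (\<pi> ` S) = card S" "card (\<pi> ` A) = card A"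
    using assms by (auto intro: card_image inj_on_subset)
  moreover have "\<pi> ` A \<subseteq> \<pi> ` S \<longleftrightarrow> A \<subseteq> S" "\<pi> ` A = \<pi> ` S \<longleftrightarrow> A = S"
    using assms by (simp_all add: inj_on_image_subset_iff inj_on_image_eq_iff)
  ultimately show ?thesis by (simp add: pulldown_prob_eq)
qed

lemma sum_pulldown_prob_le_1:
  assumes S: "S \<subseteq> U" "finite U"
  shows "(\<Sum>A\<in>{B. B \<subseteq> U \<and> card B = g}. pulldown_prob g A S) \<le> 1"
proof -
  have fS: "finite S" using S finite_subset by auto
  have fin: "finite {B. B \<subseteq> U \<and> card B = g}"
    by (rule finite_subset[of _ "Pow U"]) (use S(2) in auto)
  show ?thesis
  proof (cases "g + 1 \<le> card S")
    case True
    have "(\<Sum>A\<in>{B. B \<subseteq> U \<and> card B = g}. pulldown_prob g A S)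
        = (\<Sum>A\<in>{B. B \<subseteq> U \<and> card B = g}.
           if A \<in> {B. B \<subseteq> S \<and> card B = g} then 1 / real (card S choose g) else 0)"
      using True fS by (intro sum.cong refl) (simp add: pulldown_prob_eq)
    also have "\<dots> = (\<Sum>A\<in>{B. B \<subseteq> U \<and> card B = g} \<inter> {B. B \<subseteq> S \<and> card B = g}.
                       1 / real (card S choose g))"
      using fin by (subst sum.If_cases) auto
    also have "{B. B \<subseteq> U \<and> card B = g} \<inter> {B. B \<subseteq> S \<and> card B = g} = {B. B \<subseteq> S \<and> card B = g}"
      using S by auto
    also have "(\<Sum>A\<in>{B. B \<subseteq> S \<and> card B = g}. 1 / real (card S choose g)) = 1"
      using True fS by (simp add: n_subsets)
    finally show ?thesis by simp
  next
    case False
    then show ?thesis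
      using fS fin by (simp add: pulldown_prob_eq sum.delta')
  qed
qed

lemma avg_pulldown_choices_indicator:
  assumes "finite S"
  shows "avg (pulldown_choices g S) (\<lambda>B. if B = A then x else 1) = 1 + (x - 1) * pulldown_prob g A S"
proof -
  let ?C = "pulldown_choices g S"
  have C: "finite ?C" "?C \<noteq> {}"
    using assms finite_pulldown_choices pulldown_choices_nonempty by auto
  have "(\<Sum>B\<in>?C. if B = A then x else 1) = (\<Sum>B\<in>?C. 1 + (if B = A then x - 1 else 0))"
    by (intro sum.cong) auto
  also have "\<dots> = real (card ?C) + (if A \<in> ?C then x - 1 else 0)"
    using C by (simp add: sum.distrib)
  finally show ?thesis
    using C by (simp add: avg_def pulldown_prob_def field_simps)
qed

lemma exp_mult_card_eq_prod:
  "exp (t * real (card {f\<in>{..<F::nat}. P f})) = (\<Prod>f<F. if P f then exp t else 1)"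
proof -
  have "(\<Prod>f<F. if P f then exp t else 1) = (\<Prod>f\<in>{..<F} \<inter> {f. P f}. exp t) * (\<Prod>f\<in>{..<F} \<inter> - {f. P f}. 1)"
    by (rule prod.If_cases) simp
  also have "\<dots> = exp t ^ card {f\<in>{..<F}. P f}" by (simp add: Int_def)
  finally show ?thesis by (simp add: exp_of_nat_mult[symmetric] mult.commute)
qed

lemma prod_Times_row:
  assumes "finite A" "a \<in> A" "\<And>a' b. a' \<in> A \<Longrightarrow> a' \<noteq> a \<Longrightarrow> b \<in> B \<Longrightarrow> H (a',b) = 1"
  shows "(\<Prod>i\<in>A\<times>B. H i) = (\<Prod>b\<in>B. H (a,b))"
proof -
  have "(\<Prod>i\<in>A\<times>B. H i) = (\<Prod>a'\<in>A. \<Prod>b\<in>B. H (a',b))"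
    by (simp add: prod.cartesian_product)
  also have "\<dots> = (\<Prod>a'\<in>A. if a' = a then (\<Prod>b\<in>B. H (a,b)) else 1)"
    by (intro prod.cong) (auto simp: assms(3))
  finally show ?thesis using assms(1,2) by (simp add: prod.delta)
qed

lemma avg_exp_card_Vset:
  fixes Ch :: "nat \<times> nat \<Rightarrow> nat set set"
  assumes fin: "\<And>i. finite (Ch i)" and ne: "\<And>i. Ch i \<noteq> {}" and k: "k < K"
  shows "avg (PiE ({..<K}\<times>{..<F}) Ch) (\<lambda>T. exp (t * real (card (Vset F T k A))))
       = (\<Prod>f<F. avg (Ch (k,f)) (\<lambda>B. if B = A then exp t else 1))"
proof -
  define h where "h = (\<lambda>(i::nat\<times>nat) B. if fst i = k \<and> B = A then exp t else 1)"
  have "exp (t * real (card (Vset F T k A))) = (\<Prod>i\<in>{..<K}\<times>{..<F}. h i (T i))" for T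
  proof -
    have "exp (t * real (card (Vset F T k A))) = (\<Prod>f<F. if T (k,f) = A then exp t else 1)"
      unfolding Vset_def by (rule exp_mult_card_eq_prod)
    also have "\<dots> = (\<Prod>i\<in>{..<K}\<times>{..<F}. h i (T i))"
      using k by (subst prod_Times_row) (auto simp: h_def)
    finally show ?thesis .
  qed
  then have "avg (PiE ({..<K}\<times>{..<F}) Ch) (\<lambda>T. exp (t * real (card (Vset F T k A))))
      = (\<Prod>i\<in>{..<K}\<times>{..<F}. avg (Ch i) (h i))"
    using fin by (simp add: avg_PiE_prod)
  also have "\<dots> = (\<Prod>f<F. avg (Ch (k,f)) (h (k,f)))"
    using fin ne k by (intro prod_Times_row) (auto simp: h_def avg_const)
  finally show ?thesis by (simp add: h_def)
qed

section \<open>Groups of packets and the random placement\<close>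

lemma sum_lessThan_mult_eq_sum_blocks:
  fixes \<phi> :: "nat \<Rightarrow> 'a::comm_monoid_add"
  shows "(\<Sum>f<q*F'. \<phi> f) = (\<Sum>j<F'. \<Sum>r<q. \<phi> (j*q+r))"
proof -
  have "(\<Sum>j<F'. \<Sum>r<q. \<phi> (j*q+r)) = (\<Sum>(j,r)\<in>{..<F'}\<times>{..<q}. \<phi> (j*q+r))"
    by (simp add: sum.cartesian_product)
  also have "\<dots> = (\<Sum>f<q*F'. \<phi> f)"
  proof (rule sum.reindex_bij_witness[of _ "\<lambda>f. (f div q, f mod q)" "\<lambda>(j,r). j*q+r"])
    fix a assume "a \<in> {..<F'}\<times>{..<q}"
    then obtain j r where ar: "a = (j,r)" "j < F'" "r < q" by auto
    have "j*q + r < (j+1)*q" using ar by simp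
    also have "\<dots> \<le> F' * q" using ar by (intro mult_right_mono) auto
    finally show "(case a of (j, r) \<Rightarrow> j * q + r) \<in> {..<q * F'}" using ar by (simp add: mult.commute)
    show "((case a of (j, r) \<Rightarrow> j * q + r) div q, (case a of (j, r) \<Rightarrow> j * q + r) mod q) = a"
      using ar by simp
  next
    fix f assume f: "f \<in> {..<q*F'}"
    then have "q > 0" by (cases q) auto
    then show "(f div q, f mod q) \<in> {..<F'}\<times>{..<q}" using f
      by (auto simp: less_mult_imp_div_less mult.commute)
  qed auto
  finally show ?thesis ..
qed

lemma exp_mult_le_convex_comb:
  fixes a w :: real
  assumes "0 \<le> w" "w \<le> 1"
  shows "exp (a * w) \<le> 1 + (exp a - 1) * w"
proof -
  have "exp ((1 - w) *\<^sub>R 0 + w *\<^sub>R a) \<le> (1 - w) * exp 0 + w * exp a"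
    using assms by (intro convex_onD[OF exp_convex]) auto
  then show ?thesis by (simp add: algebra_simps)
qed

lemma prod_one_plus_le_prod_blocks:
  fixes \<phi> :: "nat \<Rightarrow> real"
  assumes nonneg: "\<And>f. 0 \<le> \<phi> f" and a: "0 \<le> a"
    and block_le_1: "\<And>j. j < F' \<Longrightarrow> (\<Sum>r<q. \<phi> (j*q+r)) \<le> 1"
  shows "(\<Prod>f<q*F'. 1 + a * \<phi> f) \<le> (\<Prod>j<F'. 1 + (exp a - 1) * (\<Sum>r<q. \<phi> (j*q+r)))"
proof -
  have "(\<Prod>f<q*F'. 1 + a * \<phi> f) \<le> (\<Prod>f<q*F'. exp (a * \<phi> f))"
    using nonneg a by (intro prod_mono) (auto intro: add_nonneg_nonneg)
  also have "\<dots> = (\<Prod>j<F'. exp (a * (\<Sum>r<q. \<phi> (j*q+r))))"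
    by (simp add: exp_sum[symmetric] sum_lessThan_mult_eq_sum_blocks sum_distrib_left)
  also have "\<dots> \<le> (\<Prod>j<F'. 1 + (exp a - 1) * (\<Sum>r<q. \<phi> (j*q+r)))"
    using nonneg block_le_1 by (intro prod_mono conjI exp_mult_le_convex_comb) (auto intro: sum_nonneg)
  finally show ?thesis .
qed

lemma cache_set_subset: "cache_set K q pl n f \<subseteq> {..<K}"
  unfolding cache_set_def by auto

lemma finite_cache_set: "finite (cache_set K q pl n f)"
  by (rule finite_subset[OF cache_set_subset]) simp

lemma cache_set_block: "r < q \<Longrightarrow> cache_set K q pl n (j*q+r) = {k\<in>{..<K}. pl (k,n,j) = r}"
  unfolding cache_set_def by simp

lemma sum_pulldown_prob_level_sets_le_1:
  fixes x :: "nat \<Rightarrow> nat"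
  assumes "A \<noteq> {}"
  shows "(\<Sum>r<q. pulldown_prob g A {k\<in>{..<K}. x k = r}) \<le> 1"
proof (cases "\<exists>r0<q. pulldown_prob g A {k\<in>{..<K}. x k = r0} \<noteq> 0")
  case True
  then obtain r0 where r0: "r0 < q" "pulldown_prob g A {k\<in>{..<K}. x k = r0} \<noteq> 0" by auto
  have "A \<subseteq> {k\<in>{..<K}. x k = r0}" using r0(2) by (rule pulldown_prob_nonzero_imp_subset)
  then have "pulldown_prob g A {k\<in>{..<K}. x k = r} = 0" if "r \<noteq> r0" for r
    using pulldown_prob_nonzero_imp_subset[of g A "{k\<in>{..<K}. x k = r}"] assms that by blast
  then have "(\<Sum>r\<in>{..<q}-{r0}. pulldown_prob g A {k\<in>{..<K}. x k = r}) = 0"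
    by (intro sum.neutral) blast
  moreover have "(\<Sum>r<q. pulldown_prob g A {k\<in>{..<K}. x k = r}) = pulldown_prob g A {k\<in>{..<K}. x k = r0}
      + (\<Sum>r\<in>{..<q}-{r0}. pulldown_prob g A {k\<in>{..<K}. x k = r})"
    using r0(1) by (intro sum.remove) auto
  ultimately have "(\<Sum>r<q. pulldown_prob g A {k\<in>{..<K}. x k = r}) = pulldown_prob g A {k\<in>{..<K}. x k = r0}"
    by simp
  also have "\<dots> \<le> 1" by (rule pulldown_prob_le_1) simp
  finally show ?thesis .
qed simp

text \<open>Curried as (n, j) \<mapsto> (\<lambda>k. pl (k, n, j)), a placement is a uniformly random function
  whose coordinates are the groups, so the groups of a file are independent.\<close>
lemma avg_placement_prod_blocks:
  fixes G :: "nat \<Rightarrow> (nat \<Rightarrow> nat) \<Rightarrow> real" and N K F' n q :: nat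
  assumes n: "n < N" and q: "q > 0"
  shows "avg (PiE ({..<K}\<times>{..<N}\<times>{..<F'}) (\<lambda>_. {..<q})) (\<lambda>pl. \<Prod>j<F'. G j (\<lambda>k. pl (k,n,j)))
       = (\<Prod>j<F'. avg (PiE {..<K} (\<lambda>_. {..<q})) (G j))"
proof -
  define \<Omega> where "\<Omega> = PiE ({..<K}\<times>{..<N}\<times>{..<F'}) (\<lambda>_. {..<q::nat})"
  define X where "X = PiE {..<K} (\<lambda>_. {..<q::nat})"
  define J where "J = {..<N}\<times>{..<F'}"
  define Y where "Y = PiE J (\<lambda>_. X)"
  define \<Phi> where "\<Phi> = (\<lambda>(y::nat\<times>nat \<Rightarrow> nat \<Rightarrow> nat) (p::nat\<times>nat\<times>nat).
      case p of (k,m,j) \<Rightarrow> if (m,j)\<in>J then y (m,j) k else undefined)"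
  define \<Psi> where "\<Psi> = (\<lambda>(pl::nat\<times>nat\<times>nat\<Rightarrow>nat) (p::nat\<times>nat).
      case p of (m,j) \<Rightarrow> if (m,j)\<in>J then (\<lambda>k. if k<K then pl (k,m,j) else undefined) else undefined)"
  have reindex: "(\<Sum>pl\<in>\<Omega>. H pl) = (\<Sum>y\<in>Y. H (\<Phi> y))" for H :: "_ \<Rightarrow> real"
  proof (rule sum.reindex_bij_witness[of _ \<Phi> \<Psi>])
    fix pl assume pl: "pl \<in> \<Omega>"
    then have "\<Phi> (\<Psi> pl) = pl"
      by (auto simp: \<Omega>_def \<Phi>_def \<Psi>_def J_def PiE_def extensional_def fun_eq_iff)
    then show "\<Phi> (\<Psi> pl) = pl" "H (\<Phi> (\<Psi> pl)) = H pl" by simp_all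
    show "\<Psi> pl \<in> Y"
      using pl by (auto simp: \<Omega>_def \<Psi>_def J_def Y_def X_def PiE_def extensional_def Pi_def)
  next
    fix y assume "y \<in> Y"
    then show "\<Psi> (\<Phi> y) = y" "\<Phi> y \<in> \<Omega>"
      by (auto simp: \<Omega>_def \<Phi>_def \<Psi>_def J_def Y_def X_def PiE_def extensional_def Pi_def fun_eq_iff)
  qed
  have "(\<lambda>k. \<Phi> y (k,n,j)) = y (n,j)" if "y \<in> Y" "j < F'" for y j
    using that n by (auto simp: \<Phi>_def Y_def J_def X_def PiE_def extensional_def fun_eq_iff)
  then have "(\<Sum>pl\<in>\<Omega>. \<Prod>j<F'. G j (\<lambda>k. pl (k,n,j))) = (\<Sum>y\<in>Y. \<Prod>j<F'. G j (y (n,j)))"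
    unfolding reindex by (intro sum.cong) simp_all
  then have "avg \<Omega> (\<lambda>pl. \<Prod>j<F'. G j (\<lambda>k. pl (k,n,j))) = avg Y (\<lambda>y. \<Prod>j<F'. G j (y (n,j)))"
    using reindex[of "\<lambda>_. 1"] by (simp add: avg_def)
  also have "\<dots> = avg Y (\<lambda>y. \<Prod>i\<in>J. (\<lambda>i x. if fst i = n then G (snd i) x else 1) i (y i))"
    unfolding J_def using n by (subst prod_Times_row[of "{..<N}" n]) auto
  also have "\<dots> = (\<Prod>i\<in>J. avg X (\<lambda>x. if fst i = n then G (snd i) x else 1))"
    unfolding Y_def by (rule avg_PiE_prod) (simp_all add: J_def X_def finite_PiE)
  also have "\<dots> = (\<Prod>j<F'. avg X (G j))"
  proof -
    have "finite X" "X \<noteq> {}" using q by (auto simp: X_def PiE_eq_empty_iff intro!: finite_PiE)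
    then have "avg X (\<lambda>_. 1) = 1" by (rule avg_const)
    then show ?thesis using n unfolding J_def by (subst prod_Times_row) auto
  qed
  finally show ?thesis unfolding \<Omega>_def X_def .
qed

lemma ex_bij_betw_image_eq:
  assumes U: "finite U" and A: "A \<subseteq> U" and A': "A' \<subseteq> U" and c: "card A = card A'"
  shows "\<exists>\<pi>. bij_betw \<pi> U U \<and> \<pi> ` A = A'"
proof -
  have fA: "finite A" "finite A'" using U A A' finite_subset by auto
  obtain f where f: "bij_betw f A A'" using finite_same_card_bij[OF fA c] by auto
  have "card (U - A) = card (U - A')" using U A A' c fA by (simp add: card_Diff_subset)
  then obtain h where h: "bij_betw h (U - A) (U - A')"
    using finite_same_card_bij[of "U - A" "U - A'"] U by auto
  define \<pi> where "\<pi> = (\<lambda>x. if x \<in> A then f x else h x)"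
  have b1: "bij_betw \<pi> A A'"
    using f by (rule bij_betw_cong[THEN iffD1, rotated]) (simp add: \<pi>_def)
  have b2: "bij_betw \<pi> (U - A) (U - A')"
    using h by (rule bij_betw_cong[THEN iffD1, rotated]) (simp add: \<pi>_def)
  have "bij_betw \<pi> (A \<union> (U - A)) (A' \<union> (U - A'))"
    by (rule bij_betw_combine[OF b1 b2]) auto
  moreover have "A \<union> (U - A) = U" "A' \<union> (U - A') = U" using A A' by auto
  ultimately show ?thesis using b1 by (auto simp: bij_betw_def)
qed

lemma avg_PiE_compose_permutation:
  fixes \<pi> :: "'i \<Rightarrow> 'i" and Y :: "'a set"
  assumes \<pi>: "bij_betw \<pi> I I" and fin: "finite I" "finite Y"
  shows "avg (PiE I (\<lambda>_. Y)) (\<lambda>x. h (restrict (x \<circ> \<pi>) I)) = avg (PiE I (\<lambda>_. Y)) h"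
proof -
  define X where "X = PiE I (\<lambda>_. Y)"
  define \<sigma> where "\<sigma> = (\<lambda>x :: 'i \<Rightarrow> 'a. restrict (x \<circ> \<pi>) I)"
  have into: "\<sigma> ` X \<subseteq> X"
    using \<pi> by (fastforce simp: \<sigma>_def X_def bij_betw_def)
  have "inj_on \<sigma> X"
  proof (rule inj_onI)
    fix x y assume xy: "x \<in> X" "y \<in> X" "\<sigma> x = \<sigma> y"
    show "x = y"
    proof (rule PiE_ext[OF xy(1,2)[unfolded X_def]])
      fix i assume "i \<in> I"
      then have "i \<in> \<pi> ` I" using \<pi> by (simp add: bij_betw_def)
      then obtain j where "j \<in> I" "\<pi> j = i" by blast
      then show "x i = y i" using fun_cong[OF xy(3), of j] by (simp add: \<sigma>_def)
    qed
  qed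
  moreover have "\<sigma> ` X = X"
    using fin by (intro endo_inj_surj[OF _ into calculation]) (simp add: X_def finite_PiE)
  ultimately have "bij_betw \<sigma> X X" by (simp add: bij_betw_def)
  then have "(\<Sum>x\<in>X. h (\<sigma> x)) = (\<Sum>x\<in>X. h x)" by (rule sum.reindex_bij_betw)
  then show ?thesis unfolding avg_def X_def \<sigma>_def by simp
qed

text \<open>Relabelling the users by a permutation that maps A to A' preserves the uniform
  distribution of the placement.\<close>
lemma avg_pulldown_prob_level_set_eq:
  fixes K q r :: nat
  assumes A: "A \<subseteq> {..<K}" and A': "A' \<subseteq> {..<K}" and c: "card A = card A'"
  shows "avg (PiE {..<K} (\<lambda>_. {..<q})) (\<lambda>x. pulldown_prob g A' {k\<in>{..<K}. x k = r})
       = avg (PiE {..<K} (\<lambda>_. {..<q})) (\<lambda>x. pulldown_prob g A {k\<in>{..<K}. x k = r})"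
proof -
  obtain \<pi> where \<pi>: "bij_betw \<pi> {..<K} {..<K}" "\<pi> ` A = A'"
    using ex_bij_betw_image_eq[OF _ A A' c] by auto
  have "pulldown_prob g A {k\<in>{..<K}. restrict (x \<circ> \<pi>) {..<K} k = r}
      = pulldown_prob g A' {k\<in>{..<K}. x k = r}" for x
  proof -
    have "{k\<in>{..<K}. restrict (x \<circ> \<pi>) {..<K} k = r} = {k\<in>{..<K}. x (\<pi> k) = r}"
      by auto
    moreover have "\<pi> ` {k\<in>{..<K}. x (\<pi> k) = r} = {k\<in>{..<K}. x k = r}"
      using \<pi>(1) by (auto simp: bij_betw_def)
    moreover have "pulldown_prob g A {k\<in>{..<K}. x (\<pi> k) = r}
        = pulldown_prob g (\<pi> ` A) (\<pi> ` {k\<in>{..<K}. x (\<pi> k) = r})"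
      using \<pi>(1) A by (intro pulldown_prob_image[symmetric]) (auto simp: bij_betw_def)
    ultimately show ?thesis using \<pi>(2) by simp
  qed
  then show ?thesis
    using avg_PiE_compose_permutation[OF \<pi>(1), of "{..<q}" "\<lambda>x. pulldown_prob g A {k\<in>{..<K}. x k = r}"]
    by simp
qed

text \<open>By symmetry all g-subsets of users have the same average, and these averages sum to at
  most 1.\<close>
lemma avg_pulldown_prob_level_set_le:
  fixes K q r :: nat
  assumes A: "A \<subseteq> {..<K}" "card A = g" and q: "q > 0" and gK: "g \<le> K"
  shows "avg (PiE {..<K} (\<lambda>_. {..<q})) (\<lambda>x. pulldown_prob g A {k\<in>{..<K}. x k = r})
         \<le> 1 / real (K choose g)"
proof -
  define X where "X = PiE {..<K} (\<lambda>_. {..<q})"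
  define \<A> where "\<A> = {B. B \<subseteq> {..<K} \<and> card B = g}"
  have X: "finite X" "X \<noteq> {}" using q by (auto simp: X_def PiE_eq_empty_iff intro!: finite_PiE)
  have "(\<Sum>A'\<in>\<A>. avg X (\<lambda>x. pulldown_prob g A' {k\<in>{..<K}. x k = r}))
      = (\<Sum>A'\<in>\<A>. avg X (\<lambda>x. pulldown_prob g A {k\<in>{..<K}. x k = r}))"
    unfolding X_def using A by (intro sum.cong refl avg_pulldown_prob_level_set_eq) (auto simp: \<A>_def)
  also have "\<dots> = real (K choose g) * avg X (\<lambda>x. pulldown_prob g A {k\<in>{..<K}. x k = r})"
    using n_subsets[of "{..<K}" g] by (simp add: \<A>_def)
  finally have "real (K choose g) * avg X (\<lambda>x. pulldown_prob g A {k\<in>{..<K}. x k = r})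
      = (\<Sum>A'\<in>\<A>. avg X (\<lambda>x. pulldown_prob g A' {k\<in>{..<K}. x k = r}))" ..
  also have "\<dots> = avg X (\<lambda>x. \<Sum>A'\<in>\<A>. pulldown_prob g A' {k\<in>{..<K}. x k = r})"
    by (rule avg_sum[symmetric])
  also have "\<dots> \<le> avg X (\<lambda>_. 1)"
    unfolding \<A>_def by (intro avg_mono sum_pulldown_prob_le_1) auto
  finally have "real (K choose g) * avg X (\<lambda>x. pulldown_prob g A {k\<in>{..<K}. x k = r}) \<le> 1"
    using X by (simp add: avg_const)
  then show ?thesis
    using gK unfolding X_def by (simp add: field_simps)
qed

lemma indicator_card_less_le_prod_exp:
  fixes x :: "nat \<Rightarrow> 'a"
  shows "(if card {k\<in>{..<K}. x k = r} < g then 1 else 0)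
   \<le> exp (real g - 1) * (\<Prod>k<K. if x k = r then exp (-1) else (1::real))"
proof -
  have "(if card {k\<in>{..<K}. x k = r} < g then 1 else 0)
      \<le> exp (real g - 1 - real (card {k\<in>{..<K}. x k = r}))"
    by (auto simp: of_nat_less_iff[symmetric] simp del: of_nat_less_iff)
  also have "\<dots> = exp (real g - 1) * exp (-1 * real (card {k\<in>{..<K}. x k = r}))"
    by (simp add: exp_add[symmetric])
  also have "exp (-1 * real (card {k\<in>{..<K}. x k = r})) = (\<Prod>k<K. if x k = r then exp (-1) else 1)"
    by (rule exp_mult_card_eq_prod)
  finally show ?thesis .
qed

lemma avg_level_set_card_less_le:
  fixes K q r g :: nat
  assumes q: "q > 0" and r: "r < q"
  shows "avg (PiE {..<K} (\<lambda>_. {..<q})) (\<lambda>x. if card {k\<in>{..<K}. x k = r} < g then 1 else 0)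
         \<le> exp (real g - 1 - real K * (1 - exp (-1)) / real q)"
proof -
  define X where "X = PiE {..<K} (\<lambda>_. {..<q})"
  define p where "p = (1 - exp (-1)) / real q"
  have "1 \<le> real q" using q by simp
  then have "1 - exp (-1) \<le> real q" using exp_gt_zero[of "-1"] by linarith
  then have p: "0 \<le> p" "p \<le> 1" using q by (auto simp: p_def divide_le_eq_1)
  have "avg {..<q} (\<lambda>a. if a = r then exp (-1) else 1) = 1 - p"
  proof -
    have "(\<Sum>a<q. if a = r then exp (-1) else 1) = (\<Sum>a<q. 1 + (if a = r then exp (-1) - 1 else 0))"
      by (intro sum.cong) auto
    also have "\<dots> = real q + (exp (-1) - 1)" using r by (simp add: sum.distrib)
    finally show ?thesis using q by (simp add: avg_def p_def field_simps)
  qed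
  then have "avg X (\<lambda>x. \<Prod>k<K. if x k = r then exp (-1) else 1) = (1 - p) ^ K"
    unfolding X_def by (subst avg_PiE_prod) auto
  also have "\<dots> \<le> exp (- p) ^ K"
    using p exp_ge_add_one_self[of "-p"] by (intro power_mono) auto
  finally have prod_le: "avg X (\<lambda>x. \<Prod>k<K. if x k = r then exp (-1) else 1) \<le> exp (- p) ^ K" .
  have "avg X (\<lambda>x. if card {k\<in>{..<K}. x k = r} < g then 1 else 0)
      \<le> avg X (\<lambda>x. exp (real g - 1) * (\<Prod>k<K. if x k = r then exp (-1) else 1))"
    by (rule avg_mono) (rule indicator_card_less_le_prod_exp)
  also have "\<dots> \<le> exp (real g - 1) * exp (- p) ^ K"
    unfolding avg_cmult using prod_le by (intro mult_left_mono) auto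
  also have "\<dots> = exp (real g - 1 - real K * p)"
    by (simp add: exp_of_nat_mult[symmetric] exp_add[symmetric])
  finally show ?thesis unfolding X_def p_def by simp
qed

section \<open>The expected rate\<close>

definition placements :: "nat \<Rightarrow> nat \<Rightarrow> nat \<Rightarrow> nat \<Rightarrow> placement set" where
  "placements K N q F' = PiE ({..<K} \<times> {..<N} \<times> {..<F'}) (\<lambda>_. {..<q})"

definition pulldown_outcomes :: "nat \<Rightarrow> nat \<Rightarrow> nat \<Rightarrow> nat \<Rightarrow> (nat \<Rightarrow> nat) \<Rightarrow> placement
    \<Rightarrow> (nat \<times> nat \<Rightarrow> nat set) set" where
  "pulldown_outcomes K q F g d pl =
     PiE ({..<K} \<times> {..<F}) (\<lambda>(k, f). pulldown_choices g (cache_set K q pl (d k) f))"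

lemma finite_placements: "finite (placements K N q F')"
  unfolding placements_def by (simp add: finite_PiE)

lemma placements_nonempty: "q > 0 \<Longrightarrow> placements K N q F' \<noteq> {}"
  unfolding placements_def by (simp add: PiE_eq_empty_iff lessThan_empty_iff)

lemma finite_pulldown_outcomes: "finite (pulldown_outcomes K q F g d pl)"
  unfolding pulldown_outcomes_def
  by (intro finite_PiE) (auto intro: finite_pulldown_choices finite_cache_set)

lemma pulldown_outcomes_nonempty: "pulldown_outcomes K q F g d pl \<noteq> {}"
  unfolding pulldown_outcomes_def
  using pulldown_choices_nonempty[OF finite_cache_set] by (auto simp: PiE_eq_empty_iff)

lemma pulldown_outcomesD:
  "T \<in> pulldown_outcomes K q F g d pl \<Longrightarrow> k < K \<Longrightarrow> f < F
   \<Longrightarrow> T (k,f) \<in> pulldown_choices g (cache_set K q pl (d k) f)"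
  unfolding pulldown_outcomes_def by (drule PiE_mem[of _ _ _ "(k,f)"]) auto

lemma expected_rate_md_eq_avg:
  assumes "grp_size N M > 0"
  shows "expected_rate_md K N M F' g d =
     avg (placements K N (grp_size N M) F')
       (\<lambda>pl. avg (pulldown_outcomes K (grp_size N M) (grp_size N M * F') g d pl)
          (rate_md K (grp_size N M * F')))"
proof -
  define q where "q = grp_size N M"
  define \<Omega> where "\<Omega> = placements K N q F'"
  define \<Omega>T where "\<Omega>T = (\<lambda>pl. pulldown_outcomes K q (q * F') g d pl)"
  have \<Omega>: "finite \<Omega>" "\<Omega> \<noteq> {}"
    using assms by (simp_all add: \<Omega>_def q_def finite_placements placements_nonempty)
  have "expected_rate_md K N M F' g d
      = measure_pmf.expectation (pmf_of_set \<Omega> \<bind> (\<lambda>pl. pmf_of_set (\<Omega>T pl))) (rate_md K (q*F'))"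
    unfolding expected_rate_md_def Let_def placement_pmf_def pulldown_pmf_def \<Omega>_def \<Omega>T_def q_def
      placements_def pulldown_outcomes_def ..
  also have "\<dots> = (\<Sum>pl\<in>\<Omega>. measure_pmf.expectation (pmf_of_set (\<Omega>T pl)) (rate_md K (q*F')) /\<^sub>R real (card \<Omega>))"
    using \<Omega> by (intro pmf_expectation_bind_pmf_of_set)
      (auto simp: \<Omega>T_def finite_pulldown_outcomes pulldown_outcomes_nonempty)
  also have "\<dots> = (\<Sum>pl\<in>\<Omega>. avg (\<Omega>T pl) (rate_md K (q*F')) / real (card \<Omega>))"
    by (simp add: avg_def integral_pmf_of_set \<Omega>T_def finite_pulldown_outcomes
        pulldown_outcomes_nonempty divide_inverse mult.commute)
  also have "\<dots> = avg \<Omega> (\<lambda>pl. avg (\<Omega>T pl) (rate_md K (q*F')))"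
    unfolding avg_def[of \<Omega>] by (rule sum_divide_distrib[symmetric])
  finally show ?thesis unfolding \<Omega>_def \<Omega>T_def q_def .
qed

text \<open>The tangent-line bound ln y \<le> ln B + y / B - 1 turns the log-sum-exp bound on the
  maximum into one that is linear in the exponentials, so that it commutes with averaging.\<close>
lemma Max_le_sum_exp:
  fixes x :: "'a \<Rightarrow> nat"
  assumes "finite S" "S \<noteq> {}" "t > 0" "B > 0"
  shows "real (Max (x ` S)) \<le> (ln B - 1 + (\<Sum>k\<in>S. exp (t * real (x k))) / B) / t"
proof -
  have "Max (x ` S) \<in> x ` S" using assms by (intro Max_in) auto
  then obtain k0 where k0: "k0 \<in> S" "Max (x ` S) = x k0" by auto
  have "exp (t * real (x k0)) \<le> (\<Sum>k\<in>S. exp (t * real (x k)))"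
    using k0 assms by (intro member_le_sum) auto
  moreover have "ln (exp (t * real (x k0)) / B) \<le> exp (t * real (x k0)) / B - 1"
    using assms by (intro ln_le_minus_one) auto
  moreover have "ln (exp (t * real (x k0)) / B) = t * real (x k0) - ln B"
    using assms by (simp add: ln_div)
  ultimately have "t * real (x k0) \<le> ln B - 1 + (\<Sum>k\<in>S. exp (t * real (x k))) / B"
    using assms by (smt (verit) divide_right_mono)
  then show ?thesis using k0 assms by (simp add: field_simps)
qed

lemma card_Vset_eq_0_if_card_large:
  assumes T: "T \<in> pulldown_outcomes K q F g d pl" and k: "k \<in> S" "k < K"
    and S: "finite S" "g + 2 \<le> card S"
  shows "card (Vset F T k (S - {k})) = 0"
proof -
  have "T (k,f) \<noteq> S - {k}" if "f < F" for f
    using pulldown_choicesD[OF pulldown_outcomesD[OF T k(2) that]] k S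
    by (auto simp: card_Diff_singleton)
  then show ?thesis by (auto simp: Vset_def)
qed

text \<open>A packet f of user k lies in V_{k,S-{k}} for at most one S, and for |S| \<le> g only if
  the pull-down left S_{d_k,f} unchanged, i.e. |S_{d_k,f}| < g.\<close>
lemma card_sets_with_remove_eq_le:
  assumes B: "B \<in> pulldown_choices g S0" and U: "finite U"
  shows "card {S\<in>{S. S \<subseteq> U \<and> card S \<le> g}. k \<in> S \<and> B = S - {k}} \<le> (if card S0 < g then 1 else 0)"
proof (cases "{S\<in>{S. S \<subseteq> U \<and> card S \<le> g}. k \<in> S \<and> B = S - {k}} = {}")
  case True
  then show ?thesis by (subst True) simp
next
  case False
  then obtain S where S: "S \<subseteq> U" "card S \<le> g" "k \<in> S" "B = S - {k}" by auto
  have "finite S" using S(1) U by (rule finite_subset)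
  then have "card B = card S - 1" "card S \<ge> 1"
    using S(3,4) by (auto simp: Suc_le_eq card_gt_0_iff)
  then have "card B < g" using S(2) by linarith
  then have "card S0 < g" using pulldown_choicesD[OF B] by auto
  moreover have "{S\<in>{S. S \<subseteq> U \<and> card S \<le> g}. k \<in> S \<and> B = S - {k}} \<subseteq> {insert k B}"
    by (auto simp: insert_absorb)
  ultimately show ?thesis using card_mono[of "{insert k B}"] by auto
qed

lemma card_filter_eq_sum: "finite A \<Longrightarrow> real (card {x\<in>A. P x}) = (\<Sum>x\<in>A. if P x then 1 else 0)"
  using sum.inter_filter[of A "\<lambda>_. 1::real" P] by simp

lemma sum_card_Vset_small_sets_le:
  assumes T: "T \<in> pulldown_outcomes K q F g d pl"
  shows "(\<Sum>S\<in>{S. S \<subseteq> {..<K} \<and> card S \<le> g}. \<Sum>k\<in>S. real (card (Vset F T k (S - {k}))))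
       \<le> (\<Sum>k<K. real (card {f\<in>{..<F}. card (cache_set K q pl (d k) f) < g}))"
proof -
  define Q where "Q = {S. S \<subseteq> {..<K} \<and> card S \<le> g}"
  have Q: "finite Q" unfolding Q_def by (rule finite_subset[of _ "Pow {..<K}"]) auto
  have "(\<Sum>S\<in>Q. \<Sum>k\<in>S. real (card (Vset F T k (S - {k}))))
      = (\<Sum>S\<in>Q. \<Sum>k<K. \<Sum>f<F. if k \<in> S \<and> T (k,f) = S - {k} then 1 else 0)"
  proof (rule sum.cong[OF refl])
    fix S assume "S \<in> Q"
    then have S: "{k\<in>{..<K}. k \<in> S} = S" by (auto simp: Q_def)
    have "(\<Sum>k<K. \<Sum>f<F. if k \<in> S \<and> T (k,f) = S - {k} then 1 else 0)
        = (\<Sum>k<K. if k \<in> S then (\<Sum>f<F. if T (k,f) = S - {k} then 1 else 0) else (0::real))"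
      by (intro sum.cong) auto
    also have "\<dots> = (\<Sum>k\<in>{k\<in>{..<K}. k \<in> S}. \<Sum>f<F. if T (k,f) = S - {k} then 1 else 0)"
      by (rule sum.inter_filter[symmetric]) simp
    also have "\<dots> = (\<Sum>k\<in>S. \<Sum>f<F. if T (k,f) = S - {k} then 1 else 0)"
      by (simp only: S)
    finally show "(\<Sum>k\<in>S. real (card (Vset F T k (S - {k}))))
        = (\<Sum>k<K. \<Sum>f<F. if k \<in> S \<and> T (k,f) = S - {k} then 1 else 0)"
      by (simp add: Vset_def card_filter_eq_sum[of "{..<F}", simplified])
  qed
  also have "\<dots> = (\<Sum>k<K. \<Sum>f<F. real (card {S\<in>Q. k \<in> S \<and> T (k,f) = S - {k}}))"
    using Q by (simp add: sum.swap[of _ Q] card_filter_eq_sum)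
  also have "\<dots> \<le> (\<Sum>k<K. \<Sum>f<F. if card (cache_set K q pl (d k) f) < g then 1 else 0)"
  proof (intro sum_mono)
    fix k f assume "k \<in> {..<K}" "f \<in> {..<F}"
    then have "card {S\<in>Q. k \<in> S \<and> T (k,f) = S - {k}}
        \<le> (if card (cache_set K q pl (d k) f) < g then 1 else 0)"
      unfolding Q_def
      by (intro card_sets_with_remove_eq_le pulldown_outcomesD[OF T]) auto
    then show "real (card {S\<in>Q. k \<in> S \<and> T (k,f) = S - {k}})
        \<le> (if card (cache_set K q pl (d k) f) < g then 1 else 0)"
      by (simp split: if_splits)
  qed
  finally show ?thesis
    unfolding Q_def by (simp add: card_filter_eq_sum[of "{..<F}", simplified])
qed

lemma Max_image_le_sum:
  fixes c :: "'a \<Rightarrow> nat"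
  assumes "finite S" "S \<noteq> {}"
  shows "real (Max (c ` S)) \<le> (\<Sum>k\<in>S. real (c k))"
proof -
  have "Max (c ` S) \<in> c ` S" using assms by (intro Max_in) auto
  then obtain k0 where "k0 \<in> S" "Max (c ` S) = c k0" by auto
  then show ?thesis using assms(1) by (auto intro: member_le_sum)
qed

lemma rate_md_le:
  assumes T: "T \<in> pulldown_outcomes K q F g d pl"
  shows "rate_md K F T \<le>
     (\<Sum>S\<in>{S. S \<subseteq> {..<K} \<and> card S = g+1}. real (Max ((\<lambda>k. card (Vset F T k (S - {k}))) ` S))) / real F
     + (\<Sum>k<K. real (card {f\<in>{..<F}. card (cache_set K q pl (d k) f) < g})) / real F"
proof -
  define P where "P = Pow {..<K} - {{}}"
  define c where "c = (\<lambda>S k. card (Vset F T k (S - {k})))"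
  define M where "M = (\<lambda>S. real (Max (c S ` S)))"
  have "finite P" by (simp add: P_def)
  have split: "M S \<le> (if card S = g+1 then M S else 0) + (if card S \<le> g then (\<Sum>k\<in>S. real (c S k)) else 0)"
    if "S \<in> P" for S
  proof -
    have S: "S \<subseteq> {..<K}" "S \<noteq> {}" using that by (auto simp: P_def)
    then have "finite S" by (auto intro: finite_subset)
    consider "card S \<le> g" | "card S = g + 1" | "g + 2 \<le> card S" by linarith
    then show ?thesis
    proof cases
      case 1
      then show ?thesis using Max_image_le_sum[OF \<open>finite S\<close> S(2)] by (simp add: M_def)
    next
      case 3
      then have "c S ` S = {0}"
        using card_Vset_eq_0_if_card_large[OF T] S \<open>finite S\<close> by (force simp: c_def)
      then show ?thesis using 3 by (simp add: M_def)
    qed simp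
  qed
  have "(\<Sum>S\<in>P. M S)
      \<le> (\<Sum>S\<in>P. (if card S = g+1 then M S else 0) + (if card S \<le> g then (\<Sum>k\<in>S. real (c S k)) else 0))"
    by (intro sum_mono split)
  also have "\<dots> = (\<Sum>S\<in>{S\<in>P. card S = g+1}. M S) + (\<Sum>S\<in>{S\<in>P. card S \<le> g}. \<Sum>k\<in>S. real (c S k))"
    by (simp add: sum.distrib sum.inter_filter P_def[symmetric] \<open>finite P\<close>)
  also have "{S\<in>P. card S = g+1} = {S. S \<subseteq> {..<K} \<and> card S = g+1}"
    by (auto simp: P_def)
  also have "(\<Sum>S\<in>{S\<in>P. card S \<le> g}. \<Sum>k\<in>S. real (c S k))
      \<le> (\<Sum>S\<in>{S. S \<subseteq> {..<K} \<and> card S \<le> g}. \<Sum>k\<in>S. real (c S k))"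
    by (intro sum_mono2) (auto simp: P_def intro: finite_subset[of _ "Pow {..<K}"])
  also have "\<dots> \<le> (\<Sum>k<K. real (card {f\<in>{..<F}. card (cache_set K q pl (d k) f) < g}))"
    unfolding c_def by (rule sum_card_Vset_small_sets_le[OF T])
  finally have "rate_md K F T \<le> ((\<Sum>S\<in>{S. S \<subseteq> {..<K} \<and> card S = g+1}. M S)
      + (\<Sum>k<K. real (card {f\<in>{..<F}. card (cache_set K q pl (d k) f) < g}))) / real F"
    unfolding rate_md_def P_def M_def c_def
    by (simp add: sum_divide_distrib[symmetric] divide_right_mono)
  then show ?thesis by (simp add: M_def c_def add_divide_distrib)
qed

lemma avg_pulldown_exp_card_Vset_le:
  fixes q F' :: nat
  assumes k: "k < K" and A: "A \<noteq> {}" and t: "0 \<le> t"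
  shows "avg (pulldown_outcomes K q (q*F') g d pl) (\<lambda>T. exp (t * real (card (Vset (q*F') T k A))))
         \<le> (\<Prod>j<F'. 1 + (exp (exp t - 1) - 1) * (\<Sum>r<q. pulldown_prob g A {k'\<in>{..<K}. pl (k', d k, j) = r}))"
proof -
  have "avg (pulldown_outcomes K q (q*F') g d pl) (\<lambda>T. exp (t * real (card (Vset (q*F') T k A))))
      = (\<Prod>f<q*F'. avg (pulldown_choices g (cache_set K q pl (d k) f)) (\<lambda>B. if B = A then exp t else 1))"
    unfolding pulldown_outcomes_def using k
    by (subst avg_exp_card_Vset)
      (auto simp: pulldown_choices_nonempty finite_cache_set intro: finite_pulldown_choices)
  also have "\<dots> = (\<Prod>f<q*F'. 1 + (exp t - 1) * pulldown_prob g A (cache_set K q pl (d k) f))"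
    by (simp add: avg_pulldown_choices_indicator finite_cache_set)
  also have "\<dots> \<le> (\<Prod>j<F'. 1 + (exp (exp t - 1) - 1) * (\<Sum>r<q. pulldown_prob g A (cache_set K q pl (d k) (j*q+r))))"
  proof (rule prod_one_plus_le_prod_blocks)
    show "0 \<le> exp t - 1" using t by simp
    show "(\<Sum>r<q. pulldown_prob g A (cache_set K q pl (d k) (j*q+r))) \<le> 1" for j
      using sum_pulldown_prob_level_sets_le_1[OF A] by (simp add: cache_set_block)
  qed (rule pulldown_prob_nonneg)
  finally show ?thesis by (simp add: cache_set_block)
qed

lemma avg_placement_single_block:
  assumes "n < N" "j < F'" "q > 0"
  shows "avg (placements K N q F') (\<lambda>pl. G (\<lambda>k. pl (k,n,j))) = avg (PiE {..<K} (\<lambda>_. {..<q})) G"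
proof -
  have "avg (placements K N q F') (\<lambda>pl. G (\<lambda>k. pl (k,n,j)))
      = avg (placements K N q F') (\<lambda>pl. \<Prod>j'<F'. (\<lambda>j' x. if j' = j then G x else 1) j' (\<lambda>k. pl (k,n,j')))"
    using assms(2) by (simp add: prod.delta)
  also have "\<dots> = (\<Prod>j'<F'. avg (PiE {..<K} (\<lambda>_. {..<q})) (\<lambda>x. if j' = j then G x else 1))"
    unfolding placements_def using assms(1,3) by (rule avg_placement_prod_blocks)
  also have "\<dots> = (\<Prod>j'<F'. if j' = j then avg (PiE {..<K} (\<lambda>_. {..<q})) G else 1)"
    using assms(3) by (intro prod.cong refl) (simp add: avg_const PiE_eq_empty_iff lessThan_empty_iff finite_PiE)
  also have "\<dots> = avg (PiE {..<K} (\<lambda>_. {..<q})) G"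
    using assms(2) by (simp add: prod.delta)
  finally show ?thesis .
qed

lemma avg_placement_prod_pulldown_prob_le:
  fixes K N q F' g n :: nat
  assumes n: "n < N" and A: "A \<subseteq> {..<K}" "card A = g" and q: "q > 0" and gK: "g \<le> K" and a: "0 \<le> a"
  shows "avg (placements K N q F')
           (\<lambda>pl. \<Prod>j<F'. 1 + a * (\<Sum>r<q. pulldown_prob g A {k'\<in>{..<K}. pl (k', n, j) = r}))
         \<le> (1 + a * real q / real (K choose g)) ^ F'"
proof -
  define X where "X = PiE {..<K} (\<lambda>_. {..<q})"
  have X: "finite X" "X \<noteq> {}" using q by (auto simp: X_def PiE_eq_empty_iff intro!: finite_PiE)
  have "avg X (\<lambda>x. 1 + a * (\<Sum>r<q. pulldown_prob g A {k'\<in>{..<K}. x k' = r}))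
      = 1 + a * (\<Sum>r<q. avg X (\<lambda>x. pulldown_prob g A {k'\<in>{..<K}. x k' = r}))"
    using X by (simp add: avg_add avg_cmult avg_sum avg_const)
  also have "\<dots> \<le> 1 + a * (\<Sum>r<q. 1 / real (K choose g))"
    unfolding X_def using a avg_pulldown_prob_level_set_le[OF A q gK]
    by (intro add_left_mono mult_left_mono sum_mono) auto
  finally have block: "avg X (\<lambda>x. 1 + a * (\<Sum>r<q. pulldown_prob g A {k'\<in>{..<K}. x k' = r}))
      \<le> 1 + a * real q / real (K choose g)" by simp
  have "avg (placements K N q F')
           (\<lambda>pl. \<Prod>j<F'. 1 + a * (\<Sum>r<q. pulldown_prob g A {k'\<in>{..<K}. pl (k', n, j) = r}))
      = (\<Prod>j<F'. avg X (\<lambda>x. 1 + a * (\<Sum>r<q. pulldown_prob g A {k'\<in>{..<K}. x k' = r})))"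
    unfolding placements_def X_def by (rule avg_placement_prod_blocks[OF n q])
  also have "\<dots> \<le> (\<Prod>j<F'. 1 + a * real q / real (K choose g))"
    using block a by (intro prod_mono) (auto intro!: avg_nonneg add_nonneg_nonneg mult_nonneg_nonneg
        sum_nonneg pulldown_prob_nonneg)
  finally show ?thesis by simp
qed

lemma avg_exp_card_Vset_le:
  fixes K N q F' g k :: nat and t :: real
  assumes q: "q > 0" and gK: "g \<le> K" and g: "1 \<le> g" and k: "k < K" and dk: "d k < N" and t: "0 \<le> t"
    and A: "A \<subseteq> {..<K}" "card A = g"
  shows "avg (placements K N q F')
          (\<lambda>pl. avg (pulldown_outcomes K q (q*F') g d pl) (\<lambda>T. exp (t * real (card (Vset (q*F') T k A)))))
        \<le> (1 + (exp (exp t - 1) - 1) * real q / real (K choose g)) ^ F'"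
proof -
  have "A \<noteq> {}" using A g by auto
  then have "avg (placements K N q F')
          (\<lambda>pl. avg (pulldown_outcomes K q (q*F') g d pl) (\<lambda>T. exp (t * real (card (Vset (q*F') T k A)))))
     \<le> avg (placements K N q F')
          (\<lambda>pl. \<Prod>j<F'. 1 + (exp (exp t - 1) - 1) * (\<Sum>r<q. pulldown_prob g A {k'\<in>{..<K}. pl (k', d k, j) = r}))"
    using k t by (intro avg_mono avg_pulldown_exp_card_Vset_le)
  also have "\<dots> \<le> (1 + (exp (exp t - 1) - 1) * real q / real (K choose g)) ^ F'"
    using t by (intro avg_placement_prod_pulldown_prob_le[OF dk A q gK]) simp
  finally show ?thesis .
qed

lemma avg_card_small_cache_sets_le:
  fixes K N q F' g :: nat and d :: "nat \<Rightarrow> nat"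
  assumes q: "q > 0" and d: "\<And>k. k < K \<Longrightarrow> d k < N"
  shows "avg (placements K N q F')
          (\<lambda>pl. \<Sum>k<K. real (card {f\<in>{..<q*F'}. card (cache_set K q pl (d k) f) < g}))
        \<le> real K * real (q*F') * exp (real g - 1 - real K * (1 - exp (-1)) / real q)"
proof -
  define E where "E = exp (real g - 1 - real K * (1 - exp (-1)) / real q)"
  define small where "small = (\<lambda>x::nat \<Rightarrow> nat. \<lambda>r. if card {k'\<in>{..<K}. x k' = r} < g then 1 else (0::real))"
  have block: "avg (placements K N q F') (\<lambda>pl. small (\<lambda>k'. pl (k', d k, j)) r) \<le> E"
    if "k < K" "j < F'" "r < q" for k j r
    using avg_placement_single_block[OF d[OF that(1)] that(2) q, of K "\<lambda>x. small x r"]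
      avg_level_set_card_less_le[OF q that(3)]
    by (simp add: small_def E_def)
  have "avg (placements K N q F')
          (\<lambda>pl. \<Sum>k<K. real (card {f\<in>{..<q*F'}. card (cache_set K q pl (d k) f) < g}))
      = (\<Sum>k<K. \<Sum>j<F'. \<Sum>r<q. avg (placements K N q F') (\<lambda>pl. small (\<lambda>k'. pl (k', d k, j)) r))"
    by (simp add: avg_sum card_filter_eq_sum[of "{..<q*F'}", simplified] sum_lessThan_mult_eq_sum_blocks
        cache_set_block small_def)
  also have "\<dots> \<le> (\<Sum>k<K. \<Sum>j<F'. \<Sum>r<q. E)"
    by (intro sum_mono block) auto
  finally show ?thesis by (simp add: E_def mult_ac)
qed

lemma rate_md_le_sum_exp:
  fixes t B :: real
  assumes T: "T \<in> pulldown_outcomes K q F g d pl" and t: "0 < t" and B: "0 < B" and F: "0 < F"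
  shows "rate_md K F T
    \<le> 1 / (B * (t * real F)) * (\<Sum>S\<in>{S. S \<subseteq> {..<K} \<and> card S = g+1}. \<Sum>k\<in>S.
           exp (t * real (card (Vset F T k (S - {k})))))
      + (real (K choose (g+1)) * (ln B - 1) / (t * real F)
         + (\<Sum>k<K. real (card {f\<in>{..<F}. card (cache_set K q pl (d k) f) < g})) / real F)"
proof -
  define \<S> where "\<S> = {S. S \<subseteq> {..<K} \<and> card S = g+1}"
  define E where "E = (\<Sum>S\<in>\<S>. \<Sum>k\<in>S. exp (t * real (card (Vset F T k (S - {k})))))"
  define small where "small = (\<Sum>k<K. real (card {f\<in>{..<F}. card (cache_set K q pl (d k) f) < g}))"
  have "card \<S> = K choose (g+1)"
    unfolding \<S>_def using n_subsets[of "{..<K}" "g+1"] by simp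
  then have "(\<Sum>S\<in>\<S>. real (Max ((\<lambda>k. card (Vset F T k (S - {k}))) ` S)))
      \<le> (\<Sum>S\<in>\<S>. (ln B - 1 + (\<Sum>k\<in>S. exp (t * real (card (Vset F T k (S - {k}))))) / B) / t)"
    unfolding \<S>_def by (intro sum_mono Max_le_sum_exp t B) (auto intro: finite_subset)
  also have "\<dots> = (real (K choose (g+1)) * (ln B - 1) + E / B) / t"
    using \<open>card \<S> = _\<close> by (simp add: E_def sum_divide_distrib[symmetric] sum.distrib)
  finally have Max_le: "(\<Sum>S\<in>\<S>. real (Max ((\<lambda>k. card (Vset F T k (S - {k}))) ` S)))
      \<le> (real (K choose (g+1)) * (ln B - 1) + E / B) / t" .
  have "rate_md K F T
      \<le> (\<Sum>S\<in>\<S>. real (Max ((\<lambda>k. card (Vset F T k (S - {k}))) ` S))) / real F + small / real F"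
    unfolding \<S>_def small_def using T by (rule rate_md_le)
  also have "\<dots> \<le> (real (K choose (g+1)) * (ln B - 1) + E / B) / t / real F + small / real F"
    using Max_le by (intro add_right_mono divide_right_mono) auto
  also have "\<dots> = 1 / (B * (t * real F)) * E + (real (K choose (g+1)) * (ln B - 1) / (t * real F) + small / real F)"
    using t B F by (simp add: field_simps)
  finally show ?thesis unfolding E_def small_def \<S>_def .
qed

lemma avg_rate_md_le:
  fixes t B :: real
  assumes t: "0 < t" and B: "0 < B" and F: "0 < F"
  shows "avg (pulldown_outcomes K q F g d pl) (rate_md K F)
    \<le> 1 / (B * (t * real F)) * (\<Sum>S\<in>{S. S \<subseteq> {..<K} \<and> card S = g+1}. \<Sum>k\<in>S.
           avg (pulldown_outcomes K q F g d pl) (\<lambda>T. exp (t * real (card (Vset F T k (S - {k}))))))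
      + (real (K choose (g+1)) * (ln B - 1) / (t * real F)
         + (\<Sum>k<K. real (card {f\<in>{..<F}. card (cache_set K q pl (d k) f) < g})) / real F)"
proof -
  define \<Omega> where "\<Omega> = pulldown_outcomes K q F g d pl"
  define \<S> where "\<S> = {S. S \<subseteq> {..<K} \<and> card S = g+1}"
  define c where "c = real (K choose (g+1)) * (ln B - 1) / (t * real F)
      + (\<Sum>k<K. real (card {f\<in>{..<F}. card (cache_set K q pl (d k) f) < g})) / real F"
  have \<Omega>: "finite \<Omega>" "\<Omega> \<noteq> {}"
    by (simp_all add: \<Omega>_def finite_pulldown_outcomes pulldown_outcomes_nonempty)
  have "avg \<Omega> (rate_md K F) \<le> avg \<Omega> (\<lambda>T. 1 / (B * (t * real F))
      * (\<Sum>S\<in>\<S>. \<Sum>k\<in>S. exp (t * real (card (Vset F T k (S - {k}))))) + c)"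
    unfolding \<Omega>_def \<S>_def c_def by (intro avg_mono rate_md_le_sum_exp t B F)
  also have "\<dots> = 1 / (B * (t * real F))
      * (\<Sum>S\<in>\<S>. \<Sum>k\<in>S. avg \<Omega> (\<lambda>T. exp (t * real (card (Vset F T k (S - {k})))))) + c"
    by (subst avg_affine[OF \<Omega>]) (simp add: avg_sum)
  finally show ?thesis unfolding \<Omega>_def \<S>_def c_def .
qed

lemma avg_sum_exp_card_Vset_le:
  fixes K N q F' g :: nat and t :: real
  assumes q: "q > 0" and g: "1 \<le> g" "g + 1 \<le> K" and d: "\<And>k. k < K \<Longrightarrow> d k < N" and t: "0 \<le> t"
  shows "avg (placements K N q F') (\<lambda>pl. \<Sum>S\<in>{S. S \<subseteq> {..<K} \<and> card S = g+1}. \<Sum>k\<in>S.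
             avg (pulldown_outcomes K q (q*F') g d pl) (\<lambda>T. exp (t * real (card (Vset (q*F') T k (S - {k}))))))
         \<le> real (K choose (g+1)) * (real (g+1) * (1 + (exp (exp t - 1) - 1) * real q / real (K choose g)) ^ F')"
proof -
  define \<S> where "\<S> = {S. S \<subseteq> {..<K} \<and> card S = g+1}"
  define B0 where "B0 = (1 + (exp (exp t - 1) - 1) * real q / real (K choose g)) ^ F'"
  have "avg (placements K N q F') (\<lambda>pl. \<Sum>S\<in>\<S>. \<Sum>k\<in>S.
          avg (pulldown_outcomes K q (q*F') g d pl) (\<lambda>T. exp (t * real (card (Vset (q*F') T k (S - {k}))))))
      \<le> (\<Sum>S\<in>\<S>. \<Sum>k\<in>S. B0)"
    unfolding avg_sum
  proof (intro sum_mono)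
    fix S k assume "S \<in> \<S>" "k \<in> S"
    then have "k < K" "S - {k} \<subseteq> {..<K}" "card (S - {k}) = g"
      by (auto simp: \<S>_def intro: finite_subset)
    then show "avg (placements K N q F') (\<lambda>pl. avg (pulldown_outcomes K q (q*F') g d pl)
        (\<lambda>T. exp (t * real (card (Vset (q*F') T k (S - {k})))))) \<le> B0"
      unfolding B0_def using q g d t by (intro avg_exp_card_Vset_le) auto
  qed
  also have "\<dots> = real (K choose (g+1)) * (real (g+1) * B0)"
    using n_subsets[of "{..<K}" "g+1"] by (simp add: \<S>_def)
  finally show ?thesis unfolding \<S>_def B0_def .
qed

lemma expected_rate_md_le:
  fixes N :: nat and M t :: real
  defines "q \<equiv> grp_size N M"
  assumes q: "q > 0" and F': "F' > 0" and g: "1 \<le> g" "g + 1 \<le> K"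
    and d: "\<And>k. k < K \<Longrightarrow> d k < N" and t: "0 < t"
  shows "expected_rate_md K N M F' g d
     \<le> real (K choose (g+1))
          * ln (real (g+1) * (1 + (exp (exp t - 1) - 1) * real q / real (K choose g)) ^ F') / (t * real (q*F'))
       + real K * exp (real g - 1 - real K * (1 - exp (-1)) / real q)"
proof -
  define F where "F = q * F'"
  define \<Omega> where "\<Omega> = placements K N q F'"
  define \<S> where "\<S> = {S. S \<subseteq> {..<K} \<and> card S = g+1}"
  define B0 where "B0 = (1 + (exp (exp t - 1) - 1) * real q / real (K choose g)) ^ F'"
  \<comment> \<open>the tangent point B is the bound on the sum over k \<in> S of the exponential moments\<close>
  define B where "B = real (g+1) * B0"
  define E where "E = exp (real g - 1 - real K * (1 - exp (-1)) / real q)"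
  define Z where "Z = (\<lambda>pl. \<Sum>S\<in>\<S>. \<Sum>k\<in>S. avg (pulldown_outcomes K q F g d pl)
      (\<lambda>T. exp (t * real (card (Vset F T k (S - {k}))))))"
  define small where "small = (\<lambda>pl. \<Sum>k<K. real (card {f\<in>{..<F}. card (cache_set K q pl (d k) f) < g}))"
  define C1 where "C1 = real (K choose (g+1))"
  have F: "0 < F" using q F' by (simp add: F_def)
  have \<Omega>: "finite \<Omega>" "\<Omega> \<noteq> {}" using q by (simp_all add: \<Omega>_def finite_placements placements_nonempty)
  have B0: "0 < B0" unfolding B0_def using t by (intro zero_less_power) (auto intro!: add_pos_nonneg)
  then have B: "0 < B" by (simp add: B_def)
  have Z_le: "avg \<Omega> Z \<le> C1 * B"
    unfolding \<Omega>_def Z_def \<S>_def F_def C1_def B_def B0_def using q g d t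
    by (intro avg_sum_exp_card_Vset_le) auto
  have small_le: "avg \<Omega> small \<le> real K * real F * E"
    unfolding \<Omega>_def small_def F_def E_def using q d by (rule avg_card_small_cache_sets_le)
  have "expected_rate_md K N M F' g d = avg \<Omega> (\<lambda>pl. avg (pulldown_outcomes K q F g d pl) (rate_md K F))"
    unfolding \<Omega>_def F_def q_def using q q_def by (simp add: expected_rate_md_eq_avg)
  also have "\<dots> \<le> avg \<Omega> (\<lambda>pl. 1 / (B * (t * real F)) * Z pl + (C1 * (ln B - 1) / (t * real F) + small pl / real F))"
    unfolding Z_def small_def C1_def \<S>_def by (intro avg_mono avg_rate_md_le t B F)
  also have "\<dots> = 1 / (B * (t * real F)) * avg \<Omega> Z + (C1 * (ln B - 1) / (t * real F) + avg \<Omega> small / real F)"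
    using \<Omega> by (simp add: avg_add avg_cmult avg_divide avg_const)
  also have "\<dots> \<le> 1 / (B * (t * real F)) * (C1 * B) + (C1 * (ln B - 1) / (t * real F) + real K * real F * E / real F)"
    using Z_le small_le t B F by (intro add_mono mult_left_mono divide_right_mono order.refl) auto
  also have "\<dots> = C1 * ln B / (t * real F) + real K * E"
    using t B F by (simp add: field_simps)
  finally show ?thesis by (simp add: C1_def B_def B0_def F_def E_def)
qed

section \<open>Asymptotics\<close>

definition rate_error :: "real \<Rightarrow> nat \<Rightarrow> real" where
  "rate_error c K = (let t = 1 / sqrt (ln (real K)) in
     (exp (exp t - 1) - 1) / t - 1 + 1 / (t * c * ln (real K)) + 1 / sqrt (real K))"

lemma rate_error_tendsto_0:
  assumes "c > 0"
  shows "rate_error c \<longlonglongrightarrow> 0"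
proof -
  have "(\<lambda>K::nat. (exp (exp (1 / sqrt (ln (real K))) - 1) - 1) * sqrt (ln (real K)) - 1) \<longlonglongrightarrow> 0"
    by real_asymp
  moreover have "(\<lambda>K::nat. sqrt (ln (real K)) / ln (real K)) \<longlonglongrightarrow> 0"
    by real_asymp
  moreover have "(\<lambda>K::nat. 1 / sqrt (real K)) \<longlonglongrightarrow> 0"
    by real_asymp
  ultimately have "(\<lambda>K::nat. ((exp (exp (1 / sqrt (ln (real K))) - 1) - 1) * sqrt (ln (real K)) - 1)
      + 1 / c * (sqrt (ln (real K)) / ln (real K)) + 1 / sqrt (real K)) \<longlonglongrightarrow> 0 + 0 + 0"
    by (intro tendsto_add tendsto_mult_right_zero)
  moreover have "rate_error c = (\<lambda>K. ((exp (exp (1 / sqrt (ln (real K))) - 1) - 1) * sqrt (ln (real K)) - 1)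
      + 1 / c * (sqrt (ln (real K)) / ln (real K)) + 1 / sqrt (real K))"
    by (rule ext) (simp add: rate_error_def Let_def)
  ultimately show ?thesis by simp
qed

lemma self_le_binomial: "1 \<le> k \<Longrightarrow> k < n \<Longrightarrow> n \<le> n choose k"
proof (induction n arbitrary: k)
  case (Suc m)
  then obtain k' where k': "k = Suc k'" by (cases k) auto
  show ?case
  proof (cases "k' = 0")
    case False
    then have "m \<le> m choose k'" using Suc k' by simp
    moreover have "1 \<le> m choose Suc k'" using Suc k' by (simp add: Suc_leI)
    ultimately show ?thesis using k' by simp
  qed (simp add: k')
qed simp

lemma exp_minus_one_le: "exp (-1::real) \<le> 4/9"
proof -
  have "(3/2)^2 \<le> exp (1/2::real) ^ 2"
    using exp_ge_add_one_self[of "1/2::real"] by (intro power_mono) auto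
  also have "exp (1/2::real) ^ 2 = exp 1" by (simp add: exp_of_nat_mult[symmetric])
  finally show ?thesis by (simp add: exp_minus field_simps power2_eq_square)
qed

lemma mult_exp_small_cache_sets_le:
  fixes K q g :: nat
  assumes q: "1 \<le> q" and lnK: "0 < ln (real K)"
    and qK: "real q \<le> real K / (27 / 4 * ln (real K))" and gK: "real g \<le> real K / (3 * real q)"
  shows "real K * exp (real g - 1 - real K * (1 - exp (-1)) / real q) \<le> 1 / sqrt (real K)"
proof -
  have K: "real K > 0" using lnK by (cases K) auto
  define \<mu> where "\<mu> = real K / real q"
  have \<mu>: "27/4 * ln (real K) \<le> \<mu>" "real g \<le> \<mu> / 3"
    using qK gK lnK q by (simp_all add: \<mu>_def field_simps)
  have "\<mu> * (1 - 4/9) \<le> \<mu> * (1 - exp (-1))"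
    using exp_minus_one_le \<mu> lnK by (intro mult_left_mono) auto
  then have "real g - 1 - real K * (1 - exp (-1)) / real q \<le> - (3/2) * ln (real K)"
    using \<mu> by (simp add: \<mu>_def)
  then have "real K * exp (real g - 1 - real K * (1 - exp (-1)) / real q) \<le> real K * exp (- (3/2) * ln (real K))"
    using K by simp
  also have "- (3/2) * ln (real K) = - (ln (real K) + ln (sqrt (real K)))"
    using K by (simp add: ln_sqrt)
  also have "exp (- (ln (real K) + ln (sqrt (real K)))) = inverse (real K * sqrt (real K))"
    using K by (simp only: exp_minus exp_add exp_ln real_sqrt_gt_zero)
  also have "real K * inverse (real K * sqrt (real K)) = 1 / sqrt (real K)"
    using K by (simp add: field_simps)
  finally show ?thesis .
qed

lemma binomial_Suc_le: "real (K choose (g+1)) \<le> real K / (real g + 1) * real (K choose g)"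
proof -
  have "Suc g * (K choose Suc g) = (K - g) * (K choose g)"
    using binomial_absorption[of g K] binomial_absorb_comp[of K g] by simp
  also have "\<dots> \<le> K * (K choose g)" by (rule mult_le_mono1) simp
  finally have "real (Suc g * (K choose Suc g)) \<le> real (K * (K choose g))"
    by (simp only: of_nat_le_iff)
  then have "(real g + 1) * real (K choose (g+1)) \<le> real K * real (K choose g)"
    by (simp add: algebra_simps)
  then show ?thesis by (simp add: field_simps)
qed

lemma ln_mult_power_le:
  fixes m x :: real
  assumes "0 < m" "0 \<le> x"
  shows "ln (m * (1 + x) ^ n) \<le> ln m + real n * x"
proof -
  have "ln (m * (1 + x) ^ n) = ln m + real n * ln (1 + x)"
    using assms by (simp add: ln_mult_pos ln_realpow)
  also have "\<dots> \<le> ln m + real n * x"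
    using assms by (intro add_left_mono mult_left_mono ln_add_one_self_le_self) auto
  finally show ?thesis .
qed

lemma multicast_term_le:
  fixes K g q F' :: nat and a t c :: real
  assumes g: "2 \<le> g" "g + 1 \<le> K" and q: "1 \<le> q" and t: "0 < t" and a: "0 \<le> a" and c: "0 < c"
    and lnK: "0 < ln (real K)"
    and F': "c * real (K choose g) * (ln (real (K choose g)))\<^sup>2 \<le> real F'"
  shows "real (K choose (g+1)) * ln (real (g+1) * (1 + a * real q / real (K choose g)) ^ F') / (t * real (q*F'))
         \<le> real K / (real g + 1) * (a / t + 1 / (t * c * ln (real K)))"
proof -
  define C where "C = real (K choose g)"
  define C1 where "C1 = real (K choose (g+1))"
  define R where "R = real K / (real g + 1)"
  have KC: "real K \<le> C" unfolding C_def using g by (simp add: self_le_binomial)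
  moreover have "1 < real K" using g by simp
  ultimately have C: "0 < C" "ln (real K) \<le> ln C" by auto
  have "(ln (real K))\<^sup>2 \<le> (ln C)\<^sup>2" using C lnK by (intro power_mono) auto
  then have "c * C * (ln (real K))\<^sup>2 \<le> c * C * (ln C)\<^sup>2" using c C by (intro mult_left_mono) auto
  then have F'_ge: "c * C * (ln (real K))\<^sup>2 \<le> real F'" using F' unfolding C_def by linarith
  have F'_pos: "0 < c * C * (ln (real K))\<^sup>2" using c C lnK by simp
  have C1: "C1 \<le> R * C" unfolding C1_def R_def C_def by (rule binomial_Suc_le)
  have R: "0 \<le> R" unfolding R_def by simp
  have "ln (real (g+1) * (1 + a * real q / C) ^ F') \<le> ln (real (g+1)) + real F' * (a * real q / C)"
    using a C by (intro ln_mult_power_le) auto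
  also have "\<dots> \<le> ln (real K) + real F' * (a * real q / C)"
    using g by simp
  finally have "C1 * ln (real (g+1) * (1 + a * real q / C) ^ F') / (t * real (q*F'))
      \<le> C1 * (ln (real K) + real F' * (a * real q / C)) / (t * real (q*F'))"
    using t q F'_ge F'_pos by (intro divide_right_mono mult_left_mono) (auto simp: C1_def)
  also have "\<dots> = C1 * ln (real K) / (t * real (q*F')) + C1 * a / (t * C)"
    using t q F'_ge F'_pos C by (simp add: field_simps)
  also have "C1 * ln (real K) / (t * real (q*F')) \<le> R * C * ln (real K) / (t * (c * C * (ln (real K))\<^sup>2))"
  proof (rule frac_le)
    show "C1 * ln (real K) \<le> R * C * ln (real K)" using C1 lnK by (intro mult_right_mono) auto
    have "F' \<le> q * F'" using q by simp
    then have "real F' \<le> real (q * F')" by (simp only: of_nat_le_iff)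
    then show "t * (c * C * (ln (real K))\<^sup>2) \<le> t * real (q * F')"
      using F'_ge t by (intro mult_left_mono) auto
  qed (use R C lnK t F'_pos in auto)
  also have "\<dots> = R / (t * c * ln (real K))"
    using C lnK t c by (simp add: field_simps power2_eq_square)
  also have "C1 * a / (t * C) = C1 / C * (a / t)" by simp
  also have "\<dots> \<le> R * (a / t)"
    using C1 C a t by (intro mult_right_mono) (auto simp: divide_le_eq)
  finally show ?thesis by (simp add: C_def C1_def R_def distrib_left)
qed

lemma expected_rate_md_nonneg: "0 \<le> expected_rate_md K N M F' g d"
  unfolding expected_rate_md_def Let_def rate_md_def
  by (rule Bochner_Integration.integral_nonneg) (auto intro!: sum_nonneg)

lemma one_le_grp_size:
  assumes "0 < M" "0 < N"
  shows "1 \<le> grp_size N M"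
proof -
  have "0 < real N / M" using assms by simp
  then show ?thesis unfolding grp_size_def by linarith
qed

lemma bounds_imp_ln_pos_Suc_le:
  fixes K g q :: nat
  assumes q: "1 \<le> q" and g: "2 \<le> g" "real g \<le> real K / (3 * real q)"
    and qK: "real q \<le> real K / (27 / 4 * ln (real K))"
  shows "0 < ln (real K)" "g + 1 \<le> K"
proof -
  show "0 < ln (real K)"
  proof (rule ccontr)
    assume "\<not> 0 < ln (real K)"
    then have "real K / (27 / 4 * ln (real K)) \<le> 0" by (intro divide_nonneg_nonpos) auto
    then show False using qK q by simp
  qed
  have "real K / (3 * real q) \<le> real K / 3" using q by (intro divide_left_mono) auto
  then show "g + 1 \<le> K" using g by linarith
qed

lemma zero_less_nat_ceiling_binomial_ln:
  assumes "0 < c" "2 \<le> g" "g + 1 \<le> K"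
  shows "0 < nat \<lceil>c * real (K choose g) * (ln (real (K choose g)))\<^sup>2\<rceil>"
proof -
  have "K \<le> K choose g" using assms by (simp add: self_le_binomial)
  then have "1 < real (K choose g)" using assms by linarith
  then have "0 < ln (real (K choose g))" by (rule ln_gt_zero)
  then show ?thesis using assms by simp
qed

lemma expected_rate_md_le_rate_error:
  fixes K N g :: nat and M c :: real and d :: "nat \<Rightarrow> nat"
  assumes c: "0 < c" and M: "0 < M" and NK: "K < N"
    and g: "2 \<le> g" "real g \<le> real K / (3 * real (grp_size N M))"
    and qK: "real (grp_size N M) \<le> real K / (27 / 4 * ln (real K))"
    and d: "\<forall>k<K. d k < N"
  shows "expected_rate_md K N M (nat \<lceil>c * real (K choose g) * (ln (real (K choose g)))\<^sup>2\<rceil>) g d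
         \<le> real K / (real g + 1) * (1 + rate_error c K)"
proof -
  define q where "q = grp_size N M"
  define F' where "F' = nat \<lceil>c * real (K choose g) * (ln (real (K choose g)))\<^sup>2\<rceil>"
  define t where "t = 1 / sqrt (ln (real K))"
  define a where "a = exp (exp t - 1) - 1"
  define R where "R = real K / (real g + 1)"
  have q: "1 \<le> q" unfolding q_def using M NK by (intro one_le_grp_size) auto
  have lnK: "0 < ln (real K)" and gK: "g + 1 \<le> K"
    using bounds_imp_ln_pos_Suc_le[OF q g(1) g(2)[folded q_def] qK[folded q_def]] by simp_all
  have F': "c * real (K choose g) * (ln (real (K choose g)))\<^sup>2 \<le> real F'"
    unfolding F'_def by linarith
  have F'_pos: "0 < F'" unfolding F'_def using c g(1) gK by (rule zero_less_nat_ceiling_binomial_ln)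
  have t: "0 < t" unfolding t_def using lnK by simp
  have a: "0 \<le> a" unfolding a_def using t by simp
  have "expected_rate_md K N M F' g d
      \<le> real (K choose (g+1)) * ln (real (g+1) * (1 + a * real q / real (K choose g)) ^ F') / (t * real (q*F'))
        + real K * exp (real g - 1 - real K * (1 - exp (-1)) / real q)"
    unfolding a_def q_def using q F'_pos g gK d t by (intro expected_rate_md_le) (auto simp: q_def)
  also have "\<dots> \<le> R * (a / t + 1 / (t * c * ln (real K))) + 1 / sqrt (real K)"
    unfolding R_def using g gK q t a c lnK F' qK
    by (intro add_mono multicast_term_le mult_exp_small_cache_sets_le) (auto simp: q_def)
  also have "\<dots> \<le> R * (a / t + 1 / (t * c * ln (real K)) + 1 / sqrt (real K))"
  proof -
    have "1 \<le> R" using gK by (simp add: R_def)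
    then have "1 / sqrt (real K) \<le> R * (1 / sqrt (real K))"
      using mult_right_mono[of 1 R "1 / sqrt (real K)"] by simp
    then show ?thesis by (simp add: distrib_left)
  qed
  also have "a / t + 1 / (t * c * ln (real K)) + 1 / sqrt (real K) = 1 + rate_error c K"
    by (simp add: rate_error_def a_def t_def Let_def)
  finally show ?thesis unfolding F'_def R_def .
qed

theorem theorem7:
  fixes c :: real
  assumes "c > 0"
  shows "\<exists>\<epsilon> :: nat \<Rightarrow> real. \<epsilon> \<longlonglongrightarrow> 0 \<and>
    (\<forall>K N g (M :: real) (d :: nat \<Rightarrow> nat).
       0 < M \<longrightarrow> M \<le> real N \<longrightarrow> N > K \<longrightarrow>
       2 \<le> g \<longrightarrow> real g \<le> real K / (3 * real (grp_size N M)) \<longrightarrow>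
       real (grp_size N M) \<le> real K / (27 / 4 * ln (real K)) \<longrightarrow>
       (\<forall>k<K. d k < N) \<longrightarrow>
       expected_rate_md K N M
          (nat \<lceil>c * real (K choose g) * (ln (real (K choose g)))\<^sup>2\<rceil>) g d
         \<le> 4 / 3 * (real K / (real g + 1)) * (1 + \<epsilon> K))"
proof (intro exI conjI allI impI)
  show "rate_error c \<longlonglongrightarrow> 0" using assms by (rule rate_error_tendsto_0)
  fix K N g M d
  assume "0 < M" "M \<le> real N" "N > K" "2 \<le> g" "real g \<le> real K / (3 * real (grp_size N M))"
    "real (grp_size N M) \<le> real K / (27 / 4 * ln (real K))" "\<forall>k<K. d k < N"
  then have "expected_rate_md K N M (nat \<lceil>c * real (K choose g) * (ln (real (K choose g)))\<^sup>2\<rceil>) g d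
      \<le> real K / (real g + 1) * (1 + rate_error c K)" (is "?E \<le> ?B")
    using assms by (intro expected_rate_md_le_rate_error) auto
  moreover have "0 \<le> ?E" by (rule expected_rate_md_nonneg)
  moreover have "x \<le> y \<Longrightarrow> 0 \<le> x \<Longrightarrow> x \<le> 4 / 3 * y" for x y :: real by linarith
  ultimately have "?E \<le> 4 / 3 * ?B" by blast
  then show "?E \<le> 4 / 3 * (real K / (real g + 1)) * (1 + rate_error c K)"
    by (simp only: mult.assoc)
qed

end
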